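(* Let $L$ be a lattice and $\mathbf x,\mathbf y\in L^n$. If $\mathbf x$ and $\mathbf y$ are comonotone, or if they are comparable (i.e. $\mathbf x\le\mathbf y$ or $\mathbf y\le\mathbf x$ componentwise), then $\mathbf x$ and $\mathbf y$ are both g-comonotone and dually g-comonotone.
   Context: $\mathbf x,\mathbf y\in L^n$ are comonotone if for all $i,j\in\{1,\dots,n\}$: ($x_i\le x_j$ and $y_i\le y_j$) or ($x_i\ge x_j$ and $y_i\ge y_j$). They are g-comonotone if for every pair $i,j$: $(x_i\vee y_i)\wedge(x_j\vee y_j)=(x_i\wedge x_j)\vee(y_i\wedge y_j)$; dually g-comonotone if for every pair $i,j$: $(x_i\wedge y_i)\vee(x_j\wedge y_j)=(x_i\vee x_j)\wedge(y_i\vee y_j)$. *)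

theory Defs
  imports Main
begin

text \<open>Vectors in L^n are represented as functions nat => L, with only the
components i < n relevant.\<close>

definition comonotone :: "nat \<Rightarrow> (nat \<Rightarrow> 'a::lattice) \<Rightarrow> (nat \<Rightarrow> 'a) \<Rightarrow> bool" where
  "comonotone n x y \<longleftrightarrow> (\<forall>i<n. \<forall>j<n.
     (x i \<le> x j \<and> y i \<le> y j) \<or> (x i \<ge> x j \<and> y i \<ge> y j))"

definition g_comonotone :: "nat \<Rightarrow> (nat \<Rightarrow> 'a::lattice) \<Rightarrow> (nat \<Rightarrow> 'a) \<Rightarrow> bool" where
  "g_comonotone n x y \<longleftrightarrow> (\<forall>i<n. \<forall>j<n.
     inf (sup (x i) (y i)) (sup (x j) (y j)) = sup (inf (x i) (x j)) (inf (y i) (y j)))"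

definition dually_g_comonotone :: "nat \<Rightarrow> (nat \<Rightarrow> 'a::lattice) \<Rightarrow> (nat \<Rightarrow> 'a) \<Rightarrow> bool" where
  "dually_g_comonotone n x y \<longleftrightarrow> (\<forall>i<n. \<forall>j<n.
     sup (inf (x i) (y i)) (inf (x j) (y j)) = inf (sup (x i) (x j)) (sup (y i) (y j)))"

definition vec_le :: "nat \<Rightarrow> (nat \<Rightarrow> 'a::order) \<Rightarrow> (nat \<Rightarrow> 'a) \<Rightarrow> bool" where
  "vec_le n x y \<longleftrightarrow> (\<forall>i<n. x i \<le> y i)"

end

theory Submission
  imports Defs
begin

text \<open>If \<open>x\<^sub>i \<le> x\<^sub>j\<close> and \<open>y\<^sub>i \<le> y\<^sub>j\<close> (which comonotonicity gives after possibly
swapping \<open>i\<close> and \<open>j\<close>), both sides of the g-comonotonicity identity collapse by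
absorption to \<open>x\<^sub>i \<squnion> y\<^sub>i\<close>, and both sides of the dual identity to \<open>x\<^sub>j \<sqinter> y\<^sub>j\<close>.
If instead \<open>x\<^sub>k \<le> y\<^sub>k\<close> for all \<open>k\<close>, they collapse to \<open>y\<^sub>i \<sqinter> y\<^sub>j\<close> and \<open>x\<^sub>i \<squnion> x\<^sub>j\<close>.
Both notions are symmetric in \<open>x\<close> and \<open>y\<close>, which handles \<open>y \<le> x\<close>.\<close>

lemma inf_sup_eq_sup_inf_if_pair_le:
  fixes a b c d :: "'a::lattice"
  assumes "a \<le> c" "b \<le> d"
  shows "inf (sup a b) (sup c d) = sup (inf a c) (inf b d)"
proof -
  have "sup a b \<le> sup c d" using assms by (rule sup_mono)
  then show ?thesis using assms by (simp add: inf.absorb1)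
qed

lemma sup_inf_eq_inf_sup_if_pair_le:
  fixes a b c d :: "'a::lattice"
  assumes "a \<le> c" "b \<le> d"
  shows "sup (inf a b) (inf c d) = inf (sup a c) (sup b d)"
proof -
  have "inf a b \<le> inf c d" using assms by (rule inf_mono)
  then show ?thesis using assms by (simp add: sup.absorb2)
qed

lemma inf_sup_eq_sup_inf_if_fst_le_snd:
  fixes a b c d :: "'a::lattice"
  assumes "a \<le> b" "c \<le> d"
  shows "inf (sup a b) (sup c d) = sup (inf a c) (inf b d)"
proof -
  have "inf a c \<le> inf b d" using assms by (rule inf_mono)
  then show ?thesis using assms by (simp add: sup.absorb2)
qed

lemma sup_inf_eq_inf_sup_if_fst_le_snd:
  fixes a b c d :: "'a::lattice"
  assumes "a \<le> b" "c \<le> d"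
  shows "sup (inf a b) (inf c d) = inf (sup a c) (sup b d)"
proof -
  have "sup a c \<le> sup b d" using assms by (rule sup_mono)
  then show ?thesis using assms by (simp add: inf.absorb1)
qed

lemma g_comonotone_commute: "g_comonotone n x y \<longleftrightarrow> g_comonotone n y x"
  by (simp add: g_comonotone_def sup.commute)

lemma dually_g_comonotone_commute:
  "dually_g_comonotone n x y \<longleftrightarrow> dually_g_comonotone n y x"
  by (simp add: dually_g_comonotone_def inf.commute)

lemma g_comonotone_if_comonotone:
  assumes "comonotone n x y"
  shows "g_comonotone n x y"
  unfolding g_comonotone_def
proof (intro allI impI)
  fix i j assume "i < n" "j < n"
  with assms consider "x i \<le> x j" "y i \<le> y j" | "x j \<le> x i" "y j \<le> y i"
    unfolding comonotone_def by auto
  then show "inf (sup (x i) (y i)) (sup (x j) (y j)) = sup (inf (x i) (x j)) (inf (y i) (y j))"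
    by cases (metis inf_sup_eq_sup_inf_if_pair_le inf.commute)+
qed

lemma dually_g_comonotone_if_comonotone:
  assumes "comonotone n x y"
  shows "dually_g_comonotone n x y"
  unfolding dually_g_comonotone_def
proof (intro allI impI)
  fix i j assume "i < n" "j < n"
  with assms consider "x i \<le> x j" "y i \<le> y j" | "x j \<le> x i" "y j \<le> y i"
    unfolding comonotone_def by auto
  then show "sup (inf (x i) (y i)) (inf (x j) (y j)) = inf (sup (x i) (x j)) (sup (y i) (y j))"
    by cases (metis sup_inf_eq_inf_sup_if_pair_le sup.commute)+
qed

lemma g_comonotone_if_vec_le: "vec_le n x y \<Longrightarrow> g_comonotone n x y"
  by (simp add: vec_le_def g_comonotone_def inf_sup_eq_sup_inf_if_fst_le_snd)

lemma dually_g_comonotone_if_vec_le: "vec_le n x y \<Longrightarrow> dually_g_comonotone n x y"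
  by (simp add: vec_le_def dually_g_comonotone_def sup_inf_eq_inf_sup_if_fst_le_snd)

theorem lemma1:
  fixes n :: nat and x y :: "nat \<Rightarrow> 'a::lattice"
  assumes "comonotone n x y \<or> vec_le n x y \<or> vec_le n y x"
  shows "g_comonotone n x y \<and> dually_g_comonotone n x y"
  using assms
proof (elim disjE)
  assume "comonotone n x y"
  then show ?thesis
    by (simp add: g_comonotone_if_comonotone dually_g_comonotone_if_comonotone)
next
  assume "vec_le n x y"
  then show ?thesis by (simp add: g_comonotone_if_vec_le dually_g_comonotone_if_vec_le)
next
  assume "vec_le n y x"
  then show ?thesis
    by (metis g_comonotone_commute dually_g_comonotone_commute
        g_comonotone_if_vec_le dually_g_comonotone_if_vec_le)
qed

end
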